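(* Let $\mathcal{D}$ and $\mathcal{X}$ be finite sets, $\mathcal{Y}=\{0,1\}$, and let $p_{D,X,Y}$ be a given joint probability mass function on $\mathcal{D}\times\mathcal{X}\times\mathcal{Y}$ (with its marginals and conditionals, e.g. $p_{X,Y}$, $p_{X,Y|D}$, regarded as given). Let $p_{Y_T}$ be a given target distribution on $\mathcal{Y}$, let $\delta:(\mathcal{X}\times\mathcal{Y})^2\to\mathbb{R}_+$ be a distortion function with $\delta((x,y),(x,y))=0$, let $\epsilon_{y,d}$, $\epsilon_{y,d_1,d_2}$, $c_{d,x,y}$ be given thresholds, let $\Delta(\cdot,\cdot)$ be a dissimilarity measure between probability distributions on $\mathcal{X}\times\mathcal{Y}$, and let $J(\cdot,\cdot)$ be a distance function between real numbers (probabilities). Consider the optimization problem over the conditional distribution (randomized mapping) $p_{\hat X,\hat Y|X,Y,D}$ from $\mathcal{D}\times\mathcal{X}\times\mathcal{Y}$ to $\mathcal{X}\times\mathcal{Y}$: \[ \min_{p_{\hat X,\hat Y|X,Y,D}} \Delta\big(p_{\hat X,\hat Y},p_{X,Y}\big) \] subject to (i) $J\big(p_{\hat Y|D}(y|d),p_{Y_T}(y)\big)\le \epsilon_{y,d}$ for all $d\in\mathcal{D}$, $y\in\{0,1\}$; (ii) $\sum_{\hat x,\hat y} p_{\hat X,\hat Y|D,X,Y}(\hat x,\hat y|d,x,y)\,\delta((x,y),(\hat x,\hat y))\le c_{d,x,y}$ for all $(d,x,y)\in\mathcal{D}\times\mathcal{X}\times\mathcal{Y}$; (iii) $p_{\hat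 X,\hat Y|X,Y,D}$ is a valid conditional probability distribution. Here $p_{\hat X,\hat Y}(\hat x,\hat y)=\sum_{d,x,y}p_{D,X,Y}(d,x,y)\,p_{\hat X,\hat Y|D,X,Y}(\hat x,\hat y|d,x,y)$ and $p_{\hat Y|D}(\hat y|d)=\sum_{\hat x}\sum_{x,y}p_{X,Y|D}(x,y|d)\,p_{\hat X,\hat Y|D,X,Y}(\hat x,\hat y|d,x,y)$. Then this problem is a convex (respectively quasiconvex) optimization problem if $\Delta(\cdot,\cdot)$ is convex (respectively quasiconvex) in its first argument with the second fixed and $J(\cdot,\cdot)$ is quasiconvex in its first argument with the second fixed. If constraint (i) is replaced by $J\big(p_{\hat Y|D}(y|d_1),p_{\hat Y|D}(y|d_2)\big)\le\epsilon_{y,d_1,d_2}$ for all $d_1,d_2\in\mathcal{D}$, $y\in\{0,1\}$, then the same conclusion holds provided $\Delta$ is (quasi)convex in its first argument and $J$ is jointly quasiconvex in both arguments.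
   Context: $D$ denotes discriminatory (protected) variables, $X$ other features, $Y$ a binary outcome; $(\hat X,\hat Y)$ is the transformed data obtained by applying the randomized mapping $p_{\hat X,\hat Y|X,Y,D}$ to $(D,X,Y)\sim p_{D,X,Y}$, with $D$ retained unchanged. *)

theory Defs
  imports "HOL-Analysis.Analysis"
begin

text \<open>Convex combinations of real-valued functions (pointwise), used to express
convexity of sets of (conditional) distributions viewed as real vectors indexed by
a finite set.\<close>

definition fmix :: "real \<Rightarrow> ('a \<Rightarrow> real) \<Rightarrow> ('a \<Rightarrow> real) \<Rightarrow> ('a \<Rightarrow> real)" where
  "fmix t f g = (\<lambda>z. t * f z + (1 - t) * g z)"

definition fconvex :: "('a \<Rightarrow> real) set \<Rightarrow> bool" where
  "fconvex S \<longleftrightarrow> (\<forall>f\<in>S. \<forall>g\<in>S. \<forall>t. 0 \<le> t \<and> t \<le> 1 \<longrightarrow> fmix t f g \<in> S)"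

definition fconvex_on :: "('a \<Rightarrow> real) set \<Rightarrow> (('a \<Rightarrow> real) \<Rightarrow> real) \<Rightarrow> bool" where
  "fconvex_on S F \<longleftrightarrow> (\<forall>f\<in>S. \<forall>g\<in>S. \<forall>t. 0 \<le> t \<and> t \<le> 1 \<longrightarrow>
      F (fmix t f g) \<le> t * F f + (1 - t) * F g)"

definition fquasiconvex_on :: "('a \<Rightarrow> real) set \<Rightarrow> (('a \<Rightarrow> real) \<Rightarrow> real) \<Rightarrow> bool" where
  "fquasiconvex_on S F \<longleftrightarrow> (\<forall>f\<in>S. \<forall>g\<in>S. \<forall>t. 0 \<le> t \<and> t \<le> 1 \<longrightarrow>
      F (fmix t f g) \<le> max (F f) (F g))"

definition quasiconvex_on :: "'a::real_vector set \<Rightarrow> ('a \<Rightarrow> real) \<Rightarrow> bool" where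
  "quasiconvex_on S f \<longleftrightarrow> (\<forall>x\<in>S. \<forall>y\<in>S. \<forall>t. 0 \<le> t \<and> t \<le> 1 \<longrightarrow>
      f (t *\<^sub>R x + (1 - t) *\<^sub>R y) \<le> max (f x) (f y))"

definition convex_problem :: "('a \<Rightarrow> real) set \<Rightarrow> (('a \<Rightarrow> real) \<Rightarrow> real) \<Rightarrow> bool" where
  "convex_problem S F \<longleftrightarrow> fconvex S \<and> fconvex_on S F"

definition quasiconvex_problem :: "('a \<Rightarrow> real) set \<Rightarrow> (('a \<Rightarrow> real) \<Rightarrow> real) \<Rightarrow> bool" where
  "quasiconvex_problem S F \<longleftrightarrow> fconvex S \<and> fquasiconvex_on S F"

definition is_pmf :: "('a::finite \<Rightarrow> real) \<Rightarrow> bool" where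
  "is_pmf p \<longleftrightarrow> (\<forall>z. 0 \<le> p z) \<and> (\<Sum>z\<in>UNIV. p z) = 1"

text \<open>Data model: p is the joint pmf of (D,X,Y); a mapping Q gives
Q ((d,x,y),(xh,yh)) = p_{Xhat,Yhat|D,X,Y}(xh,yh|d,x,y).\<close>

type_synonym ('d,'x) mapping = "('d \<times> 'x \<times> bool) \<times> ('x \<times> bool) \<Rightarrow> real"

definition pD :: "('d::finite \<times> 'x::finite \<times> bool \<Rightarrow> real) \<Rightarrow> 'd \<Rightarrow> real" where
  "pD p d = (\<Sum>x\<in>UNIV. \<Sum>y\<in>UNIV. p (d, x, y))"

definition pXY :: "('d::finite \<times> 'x::finite \<times> bool \<Rightarrow> real) \<Rightarrow> ('x \<times> bool) \<Rightarrow> real" where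
  "pXY p = (\<lambda>(x, y). \<Sum>d\<in>UNIV. p (d, x, y))"

text \<open>Conditional p_{X,Y|D}(x,y|d) (set to 0 when p_D(d) = 0, by division by zero).\<close>

definition pXY_given_D :: "('d::finite \<times> 'x::finite \<times> bool \<Rightarrow> real) \<Rightarrow> 'd \<Rightarrow> 'x \<Rightarrow> bool \<Rightarrow> real" where
  "pXY_given_D p d x y = p (d, x, y) / pD p d"

definition valid_mapping :: "('d::finite, 'x::finite) mapping \<Rightarrow> bool" where
  "valid_mapping Q \<longleftrightarrow> (\<forall>z. \<forall>w. 0 \<le> Q (z, w)) \<and> (\<forall>z. (\<Sum>w\<in>UNIV. Q (z, w)) = 1)"

definition pXYhat :: "('d::finite \<times> 'x::finite \<times> bool \<Rightarrow> real) \<Rightarrow> ('d, 'x) mapping \<Rightarrow> ('x \<times> bool) \<Rightarrow> real" where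
  "pXYhat p Q = (\<lambda>w. \<Sum>z\<in>UNIV. p z * Q (z, w))"

definition pYhat_given_D :: "('d::finite \<times> 'x::finite \<times> bool \<Rightarrow> real) \<Rightarrow> ('d, 'x) mapping \<Rightarrow> bool \<Rightarrow> 'd \<Rightarrow> real" where
  "pYhat_given_D p Q yh d =
     (\<Sum>xh\<in>UNIV. \<Sum>x\<in>UNIV. \<Sum>y\<in>UNIV. pXY_given_D p d x y * Q ((d, x, y), (xh, yh)))"

definition distortion_ok :: "('x::finite \<times> bool \<Rightarrow> 'x \<times> bool \<Rightarrow> real) \<Rightarrow> ('d::finite \<times> 'x \<times> bool \<Rightarrow> real)
     \<Rightarrow> ('d, 'x) mapping \<Rightarrow> bool" where
  "distortion_ok \<delta> c Q \<longleftrightarrow>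
     (\<forall>d x y. (\<Sum>w\<in>UNIV. Q ((d, x, y), w) * \<delta> (x, y) w) \<le> c (d, x, y))"

definition feasible1 where
  "feasible1 p pYT J eps \<delta> c =
     {Q. (\<forall>d y. J (pYhat_given_D p Q y d) (pYT y) \<le> eps y d)
         \<and> distortion_ok \<delta> c Q \<and> valid_mapping Q}"

definition feasible2 where
  "feasible2 p J eps2 \<delta> c =
     {Q. (\<forall>d1 d2 y. J (pYhat_given_D p Q y d1) (pYhat_given_D p Q y d2) \<le> eps2 y d1 d2)
         \<and> distortion_ok \<delta> c Q \<and> valid_mapping Q}"

end

theory Submission
  imports Defs
begin

text \<open>Every quantity in the problem depends affinely on the mapping Q: the
distribution of the transformed data, the conditionals p_{Yhat|D}, the expected
distortions and the normalisation constraints are all linear in Q.  Hence the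
validity and distortion constraints cut out convex sets, constraint (i) (or (i'))
is a sublevel set of a quasiconvex function composed with an affine map and is
therefore convex, and composing the (quasi)convex dissimilarity with the affine
map Q \<mapsto> p_{Xhat,Yhat} keeps it (quasi)convex.  The affine maps send valid
mappings into the domains where the hypotheses on \<Delta> and J apply: pmfs and the
unit interval.\<close>

lemma sum_UNIV_prod:
  "(\<Sum>w\<in>(UNIV :: ('a::finite \<times> 'b::finite) set). f w) = (\<Sum>a\<in>UNIV. \<Sum>b\<in>UNIV. f (a, b))"
  using sum.cartesian_product[of "\<lambda>a b. f (a, b)" UNIV UNIV] by simp

lemma fconvex_Int: "fconvex A \<Longrightarrow> fconvex B \<Longrightarrow> fconvex (A \<inter> B)"
  by (simp add: fconvex_def)

lemma fconvex_sublevel_quasiconvex_affine: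
  fixes L :: "'i \<Rightarrow> ('a \<Rightarrow> real) \<Rightarrow> 'b::real_vector"
  assumes S: "fconvex S"
    and L_range: "\<And>i Q. Q \<in> S \<Longrightarrow> L i Q \<in> C i"
    and L_affine: "\<And>i t Q1 Q2. L i (fmix t Q1 Q2) = t *\<^sub>R L i Q1 + (1 - t) *\<^sub>R L i Q2"
    and f: "\<And>i. quasiconvex_on (C i) (f i)"
  shows "fconvex {Q \<in> S. \<forall>i. f i (L i Q) \<le> e i}"
  unfolding fconvex_def
proof (intro ballI allI impI)
  fix Q1 Q2 and t :: real
  assume Q1: "Q1 \<in> {Q \<in> S. \<forall>i. f i (L i Q) \<le> e i}"
    and Q2: "Q2 \<in> {Q \<in> S. \<forall>i. f i (L i Q) \<le> e i}" and t: "0 \<le> t \<and> t \<le> 1"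
  have "f i (L i (fmix t Q1 Q2)) \<le> e i" for i
  proof -
    have "f i (L i (fmix t Q1 Q2)) \<le> max (f i (L i Q1)) (f i (L i Q2))"
      using f[of i] Q1 Q2 t L_range unfolding L_affine quasiconvex_on_def by blast
    also have "\<dots> \<le> e i"
      using Q1 Q2 by simp
    finally show ?thesis .
  qed
  moreover have "fmix t Q1 Q2 \<in> S"
    using S Q1 Q2 t by (simp add: fconvex_def)
  ultimately show "fmix t Q1 Q2 \<in> {Q \<in> S. \<forall>i. f i (L i Q) \<le> e i}"
    by simp
qed

lemma fconvex_on_compose_affine:
  assumes "\<And>Q. Q \<in> S \<Longrightarrow> L Q \<in> M"
    and "\<And>t Q1 Q2. L (fmix t Q1 Q2) = fmix t (L Q1) (L Q2)"
    and "fconvex_on M F"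
  shows "fconvex_on S (\<lambda>Q. F (L Q))"
  using assms unfolding fconvex_on_def by simp

lemma fquasiconvex_on_compose_affine:
  assumes "\<And>Q. Q \<in> S \<Longrightarrow> L Q \<in> M"
    and "\<And>t Q1 Q2. L (fmix t Q1 Q2) = fmix t (L Q1) (L Q2)"
    and "fquasiconvex_on M F"
  shows "fquasiconvex_on S (\<lambda>Q. F (L Q))"
  using assms unfolding fquasiconvex_on_def by simp

lemma fconvex_valid_mapping: "fconvex {Q. valid_mapping Q}"
  by (simp add: fconvex_def valid_mapping_def fmix_def sum.distrib
      sum_distrib_left[symmetric])

lemma fconvex_distortion_ok: "fconvex {Q. distortion_ok \<delta> c Q}"
  unfolding fconvex_def
proof (intro ballI allI impI CollectI)
  fix Q1 Q2 and t :: real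
  assume "Q1 \<in> {Q. distortion_ok \<delta> c Q}" "Q2 \<in> {Q. distortion_ok \<delta> c Q}"
    and t: "0 \<le> t \<and> t \<le> 1"
  then have Q1: "distortion_ok \<delta> c Q1" and Q2: "distortion_ok \<delta> c Q2"
    by simp_all
  show "distortion_ok \<delta> c (fmix t Q1 Q2)"
    unfolding distortion_ok_def
  proof (intro allI)
    fix d x y
    have "(\<Sum>w\<in>UNIV. fmix t Q1 Q2 ((d, x, y), w) * \<delta> (x, y) w)
        = t * (\<Sum>w\<in>UNIV. Q1 ((d, x, y), w) * \<delta> (x, y) w)
          + (1 - t) * (\<Sum>w\<in>UNIV. Q2 ((d, x, y), w) * \<delta> (x, y) w)"
      by (simp add: fmix_def distrib_right mult.assoc sum.distrib sum_distrib_left)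
    also have "\<dots> \<le> t * c (d, x, y) + (1 - t) * c (d, x, y)"
      using Q1 Q2 t unfolding distortion_ok_def by (intro add_mono mult_left_mono) auto
    finally show "(\<Sum>w\<in>UNIV. fmix t Q1 Q2 ((d, x, y), w) * \<delta> (x, y) w) \<le> c (d, x, y)"
      by (simp add: algebra_simps)
  qed
qed

lemma pXYhat_fmix: "pXYhat p (fmix t Q1 Q2) = fmix t (pXYhat p Q1) (pXYhat p Q2)"
  by (simp add: pXYhat_def fmix_def distrib_left mult.left_commute sum.distrib sum_distrib_left)

lemma pYhat_given_D_fmix:
  "pYhat_given_D p (fmix t Q1 Q2) yh d
     = t * pYhat_given_D p Q1 yh d + (1 - t) * pYhat_given_D p Q2 yh d"
  by (simp add: pYhat_given_D_def fmix_def distrib_left mult.left_commute sum.distrib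
      sum_distrib_left)

lemma valid_mapping_nonneg: "valid_mapping Q \<Longrightarrow> 0 \<le> Q (z, w)"
  unfolding valid_mapping_def by blast

lemma valid_mapping_sum: "valid_mapping Q \<Longrightarrow> (\<Sum>w\<in>UNIV. Q (z, w)) = 1"
  unfolding valid_mapping_def by blast

lemma pXYhat_is_pmf:
  assumes p: "is_pmf p" and Q: "valid_mapping Q"
  shows "is_pmf (pXYhat p Q)"
  unfolding is_pmf_def
proof
  show "\<forall>w. 0 \<le> pXYhat p Q w"
    using p valid_mapping_nonneg[OF Q] by (auto simp: pXYhat_def is_pmf_def intro!: sum_nonneg)
  have "(\<Sum>w\<in>UNIV. pXYhat p Q w) = (\<Sum>z\<in>UNIV. p z * (\<Sum>w\<in>UNIV. Q (z, w)))"
    unfolding pXYhat_def sum_distrib_left by (rule sum.swap)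
  also have "\<dots> = 1"
    using assms by (simp add: valid_mapping_sum is_pmf_def)
  finally show "(\<Sum>w\<in>UNIV. pXYhat p Q w) = 1" .
qed

lemma pXY_is_pmf:
  assumes p: "is_pmf p"
  shows "is_pmf (pXY p)"
  unfolding is_pmf_def
proof
  show "\<forall>w. 0 \<le> pXY p w"
    using p by (auto simp: pXY_def is_pmf_def intro!: sum_nonneg)
  have "(\<Sum>w\<in>UNIV. pXY p w) = (\<Sum>x\<in>UNIV. \<Sum>y\<in>UNIV. \<Sum>d\<in>UNIV. p (d, x, y))"
    by (simp add: sum_UNIV_prod pXY_def)
  also have "\<dots> = (\<Sum>x\<in>UNIV. \<Sum>d\<in>UNIV. \<Sum>y\<in>UNIV. p (d, x, y))"
    by (intro sum.cong refl sum.swap)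
  also have "\<dots> = (\<Sum>d\<in>UNIV. \<Sum>x\<in>UNIV. \<Sum>y\<in>UNIV. p (d, x, y))"
    by (rule sum.swap)
  also have "\<dots> = 1"
    using p by (simp add: is_pmf_def sum_UNIV_prod)
  finally show "(\<Sum>w\<in>UNIV. pXY p w) = 1" .
qed

lemma pXY_given_D_nonneg:
  assumes "is_pmf p"
  shows "0 \<le> pXY_given_D p d x y"
  using assms
  by (auto simp: pXY_given_D_def pD_def is_pmf_def intro!: divide_nonneg_nonneg sum_nonneg)

text \<open>The conditional sums to 1 if p_D(d) > 0 and to 0 otherwise (division by zero).\<close>

lemma sum_pXY_given_D_le_1: "(\<Sum>x\<in>UNIV. \<Sum>y\<in>UNIV. pXY_given_D p d x y) \<le> 1"
  by (simp add: pXY_given_D_def sum_divide_distrib[symmetric] pD_def[symmetric])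

lemma valid_mapping_sum_fst_le_1:
  assumes "valid_mapping Q"
  shows "(\<Sum>xh\<in>UNIV. Q (z, (xh, yh))) \<le> 1"
proof -
  have "(\<Sum>xh\<in>UNIV. Q (z, (xh, yh))) \<le> (\<Sum>xh\<in>UNIV. \<Sum>b\<in>UNIV. Q (z, (xh, b)))"
    using valid_mapping_nonneg[OF assms] by (intro sum_mono member_le_sum) auto
  also have "\<dots> = 1"
    using valid_mapping_sum[OF assms]
    by (simp add: sum_UNIV_prod[of "\<lambda>w. Q (z, w)", symmetric])
  finally show ?thesis .
qed

lemma pYhat_given_D_in_unit:
  assumes p: "is_pmf p" and Q: "valid_mapping Q"
  shows "pYhat_given_D p Q yh d \<in> {0..1}"
proof -
  have "pYhat_given_D p Q yh d
      = (\<Sum>x\<in>UNIV. \<Sum>y\<in>UNIV. pXY_given_D p d x y * (\<Sum>xh\<in>UNIV. Q ((d, x, y), (xh, yh))))"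
  proof -
    have "pYhat_given_D p Q yh d
        = (\<Sum>x\<in>UNIV. \<Sum>xh\<in>UNIV. \<Sum>y\<in>UNIV. pXY_given_D p d x y * Q ((d, x, y), (xh, yh)))"
      unfolding pYhat_given_D_def by (rule sum.swap)
    also have "\<dots> = (\<Sum>x\<in>UNIV. \<Sum>y\<in>UNIV. \<Sum>xh\<in>UNIV. pXY_given_D p d x y * Q ((d, x, y), (xh, yh)))"
      by (intro sum.cong refl sum.swap)
    finally show ?thesis
      by (simp only: sum_distrib_left)
  qed
  also have "\<dots> \<le> (\<Sum>x\<in>UNIV. \<Sum>y\<in>UNIV. pXY_given_D p d x y * 1)"
    using p Q by (intro sum_mono mult_left_mono pXY_given_D_nonneg valid_mapping_sum_fst_le_1)
  also have "\<dots> \<le> 1"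
    using sum_pXY_given_D_le_1 by simp
  finally have "pYhat_given_D p Q yh d \<le> 1" .
  moreover have "0 \<le> pYhat_given_D p Q yh d"
    using valid_mapping_nonneg[OF Q]
    by (auto simp: pYhat_given_D_def intro!: sum_nonneg mult_nonneg_nonneg pXY_given_D_nonneg p)
  ultimately show ?thesis
    by simp
qed

lemma fconvex_feasible1:
  assumes p: "is_pmf p" and J: "\<forall>b. quasiconvex_on {0..1} (\<lambda>a. J a b)"
  shows "fconvex (feasible1 p pYT J eps \<delta> c)"
proof -
  let ?V = "{Q. valid_mapping Q} \<inter> {Q. distortion_ok \<delta> c Q}"
  let ?L = "\<lambda>(y, d) Q. pYhat_given_D p Q y d"
  let ?f = "\<lambda>(y, d) a. J a (pYT y)"
  let ?e = "\<lambda>(y, d). eps y d"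
  have "fconvex {Q \<in> ?V. \<forall>i. ?f i (?L i Q) \<le> ?e i}"
  proof (rule fconvex_sublevel_quasiconvex_affine
      [where C = "\<lambda>_. {0..1}" and f = ?f and L = ?L and e = ?e])
    show "fconvex ?V"
      by (intro fconvex_Int fconvex_valid_mapping fconvex_distortion_ok)
    show "?L i Q \<in> {0..1}" if "Q \<in> ?V" for i Q
      using that pYhat_given_D_in_unit[OF p] by (auto split: prod.splits)
    show "?L i (fmix t Q1 Q2) = t *\<^sub>R ?L i Q1 + (1 - t) *\<^sub>R ?L i Q2" for i t Q1 Q2
      by (simp add: pYhat_given_D_fmix split: prod.splits)
    show "quasiconvex_on {0..1} (?f i)" for i
      using J by (simp split: prod.splits)
  qed
  moreover have "feasible1 p pYT J eps \<delta> c = {Q \<in> ?V. \<forall>i. ?f i (?L i Q) \<le> ?e i}"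
    by (auto simp: feasible1_def)
  ultimately show ?thesis
    by simp
qed

lemma fconvex_feasible2:
  assumes p: "is_pmf p" and J: "quasiconvex_on ({0..1} \<times> {0..1}) (\<lambda>(a, b). J a b)"
  shows "fconvex (feasible2 p J eps2 \<delta> c)"
proof -
  let ?V = "{Q. valid_mapping Q} \<inter> {Q. distortion_ok \<delta> c Q}"
  let ?L = "\<lambda>(y, d1, d2) Q. (pYhat_given_D p Q y d1, pYhat_given_D p Q y d2)"
  let ?e = "\<lambda>(y, d1, d2). eps2 y d1 d2"
  have "fconvex {Q \<in> ?V. \<forall>i. (\<lambda>(a, b). J a b) (?L i Q) \<le> ?e i}"
  proof (rule fconvex_sublevel_quasiconvex_affine
      [where C = "\<lambda>_. {0..1} \<times> {0..1}" and L = ?L and e = ?e])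
    show "fconvex ?V"
      by (intro fconvex_Int fconvex_valid_mapping fconvex_distortion_ok)
    show "?L i Q \<in> {0..1} \<times> {0..1}" if "Q \<in> ?V" for i Q
      using that pYhat_given_D_in_unit[OF p] by (auto split: prod.splits)
    show "?L i (fmix t Q1 Q2) = t *\<^sub>R ?L i Q1 + (1 - t) *\<^sub>R ?L i Q2" for i t Q1 Q2
      by (simp add: pYhat_given_D_fmix split: prod.splits)
  qed (rule J)
  moreover have "feasible2 p J eps2 \<delta> c = {Q \<in> ?V. \<forall>i. (\<lambda>(a, b). J a b) (?L i Q) \<le> ?e i}"
    by (auto simp: feasible2_def)
  ultimately show ?thesis
    by simp
qed

lemma fconvex_on_objective:
  assumes "is_pmf p" and "S \<subseteq> {Q. valid_mapping Q}"
    and "\<forall>\<nu>. is_pmf \<nu> \<longrightarrow> fconvex_on {\<mu>. is_pmf \<mu>} (\<lambda>\<mu>. \<Delta> \<mu> \<nu>)"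
  shows "fconvex_on S (\<lambda>Q. \<Delta> (pXYhat p Q) (pXY p))"
  using assms
  by (intro fconvex_on_compose_affine[where M = "{\<mu>. is_pmf \<mu>}", OF _ pXYhat_fmix])
    (auto simp: pXYhat_is_pmf pXY_is_pmf)

lemma fquasiconvex_on_objective:
  assumes "is_pmf p" and "S \<subseteq> {Q. valid_mapping Q}"
    and "\<forall>\<nu>. is_pmf \<nu> \<longrightarrow> fquasiconvex_on {\<mu>. is_pmf \<mu>} (\<lambda>\<mu>. \<Delta> \<mu> \<nu>)"
  shows "fquasiconvex_on S (\<lambda>Q. \<Delta> (pXYhat p Q) (pXY p))"
  using assms
  by (intro fquasiconvex_on_compose_affine[where M = "{\<mu>. is_pmf \<mu>}", OF _ pXYhat_fmix])
    (auto simp: pXYhat_is_pmf pXY_is_pmf)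

theorem proposition1:
  fixes p :: "'d::finite \<times> 'x::finite \<times> bool \<Rightarrow> real"
    and pYT :: "bool \<Rightarrow> real"
    and \<delta> :: "'x \<times> bool \<Rightarrow> 'x \<times> bool \<Rightarrow> real"
    and eps :: "bool \<Rightarrow> 'd \<Rightarrow> real"
    and eps2 :: "bool \<Rightarrow> 'd \<Rightarrow> 'd \<Rightarrow> real"
    and c :: "'d \<times> 'x \<times> bool \<Rightarrow> real"
    and \<Delta> :: "('x \<times> bool \<Rightarrow> real) \<Rightarrow> ('x \<times> bool \<Rightarrow> real) \<Rightarrow> real"
    and J :: "real \<Rightarrow> real \<Rightarrow> real"
  assumes p_pmf: "is_pmf p"
    and pYT_pmf: "is_pmf pYT"
    and \<delta>_nonneg: "\<forall>a b. 0 \<le> \<delta> a b"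
    and \<delta>_refl: "\<forall>a. \<delta> a a = 0"
  shows
    "((\<forall>\<nu>. is_pmf \<nu> \<longrightarrow> fconvex_on {\<mu>. is_pmf \<mu>} (\<lambda>\<mu>. \<Delta> \<mu> \<nu>))
        \<and> (\<forall>b. quasiconvex_on {0..1} (\<lambda>a. J a b))
      \<longrightarrow> convex_problem (feasible1 p pYT J eps \<delta> c) (\<lambda>Q. \<Delta> (pXYhat p Q) (pXY p)))
   \<and> ((\<forall>\<nu>. is_pmf \<nu> \<longrightarrow> fquasiconvex_on {\<mu>. is_pmf \<mu>} (\<lambda>\<mu>. \<Delta> \<mu> \<nu>))
        \<and> (\<forall>b. quasiconvex_on {0..1} (\<lambda>a. J a b))
      \<longrightarrow> quasiconvex_problem (feasible1 p pYT J eps \<delta> c) (\<lambda>Q. \<Delta> (pXYhat p Q) (pXY p)))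
   \<and> ((\<forall>\<nu>. is_pmf \<nu> \<longrightarrow> fconvex_on {\<mu>. is_pmf \<mu>} (\<lambda>\<mu>. \<Delta> \<mu> \<nu>))
        \<and> quasiconvex_on ({0..1} \<times> {0..1}) (\<lambda>(a, b). J a b)
      \<longrightarrow> convex_problem (feasible2 p J eps2 \<delta> c) (\<lambda>Q. \<Delta> (pXYhat p Q) (pXY p)))
   \<and> ((\<forall>\<nu>. is_pmf \<nu> \<longrightarrow> fquasiconvex_on {\<mu>. is_pmf \<mu>} (\<lambda>\<mu>. \<Delta> \<mu> \<nu>))
        \<and> quasiconvex_on ({0..1} \<times> {0..1}) (\<lambda>(a, b). J a b)
      \<longrightarrow> quasiconvex_problem (feasible2 p J eps2 \<delta> c) (\<lambda>Q. \<Delta> (pXYhat p Q) (pXY p)))"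
proof -
  have valid: "feasible1 p pYT J eps \<delta> c \<subseteq> {Q. valid_mapping Q}"
    "feasible2 p J eps2 \<delta> c \<subseteq> {Q. valid_mapping Q}"
    by (auto simp: feasible1_def feasible2_def)
  show ?thesis
    unfolding convex_problem_def quasiconvex_problem_def
    using fconvex_feasible1[OF p_pmf] fconvex_feasible2[OF p_pmf]
      fconvex_on_objective[OF p_pmf] fquasiconvex_on_objective[OF p_pmf] valid
    by blast
qed

end
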